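(* Let $r_{BD}$ be the Belavin–Drinfeld $r$-matrix for $sl(n,\overline{\mathbb{K}})$ associated to an admissible triple $(\Gamma_1,\Gamma_2,\tau)$. Then $C(r_{BD})$ consists exactly of the diagonal matrices $T=\mathrm{diag}(t_1,\dots,t_n)$ with $t_i=s_is_{i+1}\cdots s_n$, where $s_1,\dots,s_n\in\overline{\mathbb{K}}^\times$ satisfy $s_i=s_j$ whenever $\alpha_i\in\Gamma_1$ and $\tau(\alpha_i)=\alpha_j$.
   Context: $\mathbb{K}=\mathbb{C}((\hbar))$, $\overline{\mathbb{K}}$ its algebraic closure. For $sl(n)$: Cartan $\mathfrak{h}$ = traceless diagonal matrices, simple roots $\alpha_i=\epsilon_i-\epsilon_{i+1}$, root vectors $e_{\epsilon_i-\epsilon_k}=e_{ik}$, $\Omega=\sum_{i,k}e_{ik}\otimes e_{ki}-\frac1nI\otimes I$ with Cartan part $\Omega_0$. Admissible triple: $\Gamma_1,\Gamma_2\subset\{\alpha_1,\dots,\alpha_{n-1}\}$, $\tau:\Gamma_1\to\Gamma_2$ isometric bijection with every $\alpha\in\Gamma_1$ having some $\tau^k(\alpha)\notin\Gamma_1$. $r_{BD}=r_0+\sum_{\alpha>0}e_\alpha\otimes e_{-\alpha}+\sum_{\beta\in(\mathbb{Z}\Gamma_1)^+}\sum_{k\ge1}e_\beta\wedge e_{-\tau^k(\beta)}$ with $r_0\in\mathfrak{h}(\overline{\mathbb{K}})^{\otimes2}$, $r_0+r_0^{21}=\Omega_0$, $(\tau(\alpha)\otimes1+1\otimes\alpha)(r_0)=0$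 for $\alpha\in\Gamma_1$. $C(r)=\{X\in GL(n,\overline{\mathbb{K}}):(\mathrm{Ad}_X\otimes\mathrm{Ad}_X)(r)=r\}$ with $\mathrm{Ad}_X(a)=XaX^{-1}$. *)

theory Defs
  imports "HOL-Algebra.Algebraic_Closure_Type"
    "HOL-Computational_Algebra.Formal_Laurent_Series"
begin

text \<open>The field \<open>K-bar\<close>: algebraic closure of the Laurent series field C((h)).\<close>
type_synonym Kbar = "complex fls alg_closure"

text \<open>n x n matrices are functions nat => nat => 'a, indices 1..n, zero outside.
  Elements of gl(n) (x) gl(n) are 4-index arrays: T i j k l is the coefficient
  of e_ij (x) e_kl.\<close>
type_synonym 'a sqmat = "nat \<Rightarrow> nat \<Rightarrow> 'a"
type_synonym 'a tens = "nat \<Rightarrow> nat \<Rightarrow> nat \<Rightarrow> nat \<Rightarrow> 'a"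

definition is_mat :: "nat \<Rightarrow> 'a::zero sqmat \<Rightarrow> bool" where
  "is_mat n M \<longleftrightarrow> (\<forall>i j. (i \<notin> {1..n} \<or> j \<notin> {1..n}) \<longrightarrow> M i j = 0)"

definition mat_mult :: "nat \<Rightarrow> 'a::comm_ring_1 sqmat \<Rightarrow> 'a sqmat \<Rightarrow> 'a sqmat" where
  "mat_mult n P Q = (\<lambda>i j. \<Sum>k\<in>{1..n}. P i k * Q k j)"

definition mat_id :: "nat \<Rightarrow> 'a::comm_ring_1 sqmat" where
  "mat_id n = (\<lambda>i j. if i = j \<and> i \<in> {1..n} then 1 else 0)"

definition emat :: "nat \<Rightarrow> nat \<Rightarrow> 'a::comm_ring_1 sqmat" where
  "emat i j = (\<lambda>a b. if a = i \<and> b = j then 1 else 0)"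

definition diag_mat :: "nat \<Rightarrow> (nat \<Rightarrow> 'a::comm_ring_1) \<Rightarrow> 'a sqmat" where
  "diag_mat n t = (\<lambda>i j. if i = j \<and> i \<in> {1..n} then t i else 0)"

definition inverse_pair :: "nat \<Rightarrow> 'a::comm_ring_1 sqmat \<Rightarrow> 'a sqmat \<Rightarrow> bool" where
  "inverse_pair n P Q \<longleftrightarrow> is_mat n Q \<and> mat_mult n P Q = mat_id n \<and> mat_mult n Q P = mat_id n"

definition GL :: "nat \<Rightarrow> 'a::comm_ring_1 sqmat set" where
  "GL n = {P. is_mat n P \<and> (\<exists>Q. inverse_pair n P Q)}"

definition mat_inv :: "nat \<Rightarrow> 'a::comm_ring_1 sqmat \<Rightarrow> 'a sqmat" where
  "mat_inv n P = (THE Q. inverse_pair n P Q)"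

definition Ad :: "nat \<Rightarrow> 'a::comm_ring_1 sqmat \<Rightarrow> 'a sqmat \<Rightarrow> 'a sqmat" where
  "Ad n P A = mat_mult n (mat_mult n P A) (mat_inv n P)"

definition tensor :: "'a::comm_ring_1 sqmat \<Rightarrow> 'a sqmat \<Rightarrow> 'a tens" where
  "tensor A B = (\<lambda>i j k l. A i j * B k l)"

definition wedge :: "'a::comm_ring_1 sqmat \<Rightarrow> 'a sqmat \<Rightarrow> 'a tens" where
  "wedge A B = (\<lambda>i j k l. tensor A B i j k l - tensor B A i j k l)"

definition Ad2 :: "nat \<Rightarrow> 'a::comm_ring_1 sqmat \<Rightarrow> 'a tens \<Rightarrow> 'a tens" where
  "Ad2 n P T = (\<lambda>a b c d. \<Sum>i\<in>{1..n}. \<Sum>j\<in>{1..n}. \<Sum>k\<in>{1..n}. \<Sum>l\<in>{1..n}.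
      T i j k l * tensor (Ad n P (emat i j)) (Ad n P (emat k l)) a b c d)"

definition Cent :: "nat \<Rightarrow> 'a::comm_ring_1 tens \<Rightarrow> 'a sqmat set" where
  "Cent n r = {P \<in> GL n. Ad2 n P r = r}"

definition flip21 :: "'a tens \<Rightarrow> 'a tens" where
  "flip21 T = (\<lambda>i j k l. T k l i j)"

text \<open>Cartan part of the Casimir: Omega_0 = sum_i e_ii (x) e_ii - 1/n I (x) I\<close>
definition Omega0 :: "nat \<Rightarrow> 'a::field tens" where
  "Omega0 n = (\<lambda>a b c d. (\<Sum>i\<in>{1..n}. tensor (emat i i) (emat i i) a b c d)
       - tensor (mat_id n) (mat_id n) a b c d / of_nat n)"

text \<open>h (x) h, h = traceless diagonal matrices.\<close>
definition in_hh :: "nat \<Rightarrow> 'a::comm_ring_1 tens \<Rightarrow> bool" where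
  "in_hh n T \<longleftrightarrow> (\<exists>\<rho> :: nat \<Rightarrow> nat \<Rightarrow> 'a.
      (\<forall>i\<in>{1..n}. (\<Sum>k\<in>{1..n}. \<rho> i k) = 0) \<and> (\<forall>k\<in>{1..n}. (\<Sum>i\<in>{1..n}. \<rho> i k) = 0) \<and>
      T = (\<lambda>a b c d. \<Sum>i\<in>{1..n}. \<Sum>k\<in>{1..n}. \<rho> i k * tensor (emat i i) (emat k k) a b c d))"

definition root_fun :: "nat \<Rightarrow> 'a::comm_ring_1 sqmat \<Rightarrow> 'a" where
  "root_fun j A = A j j - A (Suc j) (Suc j)"

definition slot1 :: "nat \<Rightarrow> ('a::comm_ring_1 sqmat \<Rightarrow> 'a) \<Rightarrow> 'a tens \<Rightarrow> 'a sqmat" where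
  "slot1 n f T = (\<lambda>k l. \<Sum>i\<in>{1..n}. \<Sum>j\<in>{1..n}. T i j k l * f (emat i j))"

definition slot2 :: "nat \<Rightarrow> ('a::comm_ring_1 sqmat \<Rightarrow> 'a) \<Rightarrow> 'a tens \<Rightarrow> 'a sqmat" where
  "slot2 n f T = (\<lambda>i j. \<Sum>k\<in>{1..n}. \<Sum>l\<in>{1..n}. T i j k l * f (emat k l))"

text \<open>Roots in epsilon-coordinates (functions nat => int).\<close>
definition eps :: "nat \<Rightarrow> nat \<Rightarrow> int" where
  "eps i = (\<lambda>m. if m = i then 1 else 0)"

definition alpha :: "nat \<Rightarrow> nat \<Rightarrow> int" where
  "alpha i = (\<lambda>m. eps i m - eps (Suc i) m)"

text \<open>inner products of simple roots (Cartan matrix of A_{n-1})\<close>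
definition cartan :: "nat \<Rightarrow> nat \<Rightarrow> int" where
  "cartan i j = (if i = j then 2 else if Suc i = j \<or> Suc j = i then -1 else 0)"

definition admissible :: "nat \<Rightarrow> nat set \<Rightarrow> nat set \<Rightarrow> (nat \<Rightarrow> nat) \<Rightarrow> bool" where
  "admissible n G1 G2 \<tau> \<longleftrightarrow> G1 \<subseteq> {1..<n} \<and> G2 \<subseteq> {1..<n} \<and> bij_betw \<tau> G1 G2 \<and>
     (\<forall>i\<in>G1. \<forall>j\<in>G1. cartan (\<tau> i) (\<tau> j) = cartan i j) \<and>
     (\<forall>i\<in>G1. \<exists>k. (\<tau> ^^ k) i \<notin> G1)"

definition posroots :: "nat \<Rightarrow> (nat \<Rightarrow> int) set" where
  "posroots n = {(\<lambda>m. eps a m - eps b m) | a b. 1 \<le> a \<and> a < b \<and> b \<le> n}"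

definition root_of :: "nat \<Rightarrow> (nat \<Rightarrow> int) \<Rightarrow> nat \<Rightarrow> int" where
  "root_of n c = (\<lambda>m. \<Sum>i\<in>{1..<n}. c i * alpha i m)"

definition supp_in :: "(nat \<Rightarrow> int) \<Rightarrow> nat set \<Rightarrow> bool" where
  "supp_in c S \<longleftrightarrow> (\<forall>i. c i \<noteq> 0 \<longrightarrow> i \<in> S)"

definition lattice :: "nat \<Rightarrow> nat set \<Rightarrow> (nat \<Rightarrow> int) set" where
  "lattice n G1 = {root_of n c | c. supp_in c G1}"

definition coeffs :: "nat \<Rightarrow> nat set \<Rightarrow> (nat \<Rightarrow> int) \<Rightarrow> nat \<Rightarrow> int" where
  "coeffs n G1 \<beta> = (THE c. supp_in c G1 \<and> \<beta> = root_of n c)"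

text \<open>linear extension of tau on alpha-coordinates\<close>
definition tau_lin :: "nat set \<Rightarrow> (nat \<Rightarrow> nat) \<Rightarrow> (nat \<Rightarrow> int) \<Rightarrow> nat \<Rightarrow> int" where
  "tau_lin G1 \<tau> c = (\<lambda>j. \<Sum>i\<in>{i\<in>G1. \<tau> i = j}. c i)"

text \<open>tau^k(beta) is defined: tau^(m)(beta) lies in Z Gamma_1 for all m < k\<close>
definition tau_defined :: "nat \<Rightarrow> nat set \<Rightarrow> (nat \<Rightarrow> nat) \<Rightarrow> (nat \<Rightarrow> int) \<Rightarrow> nat \<Rightarrow> bool" where
  "tau_defined n G1 \<tau> \<beta> k \<longleftrightarrow> (\<forall>m<k. supp_in ((tau_lin G1 \<tau> ^^ m) (coeffs n G1 \<beta>)) G1)"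

definition tau_pow :: "nat \<Rightarrow> nat set \<Rightarrow> (nat \<Rightarrow> nat) \<Rightarrow> (nat \<Rightarrow> int) \<Rightarrow> nat \<Rightarrow> nat \<Rightarrow> int" where
  "tau_pow n G1 \<tau> \<beta> k = root_of n ((tau_lin G1 \<tau> ^^ k) (coeffs n G1 \<beta>))"

text \<open>root vector e_gamma: e_{eps_a - eps_b} = e_ab\<close>
definition root_vec :: "nat \<Rightarrow> (nat \<Rightarrow> int) \<Rightarrow> 'a::comm_ring_1 sqmat" where
  "root_vec n \<gamma> = (\<lambda>x y. \<Sum>(a,b)\<in>{(a,b). a \<in> {1..n} \<and> b \<in> {1..n} \<and> a \<noteq> b \<and>
       \<gamma> = (\<lambda>m. eps a m - eps b m)}. emat a b x y)"

definition r_BD :: "nat \<Rightarrow> nat set \<Rightarrow> (nat \<Rightarrow> nat) \<Rightarrow> 'a::comm_ring_1 tens \<Rightarrow> 'a tens" where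
  "r_BD n G1 \<tau> r0 = (\<lambda>a b c d. r0 a b c d
     + (\<Sum>(i,k)\<in>{(i,k). 1 \<le> i \<and> i < k \<and> k \<le> n}. tensor (emat i k) (emat k i) a b c d)
     + (\<Sum>\<beta>\<in>posroots n \<inter> lattice n G1. \<Sum>k\<in>{k. 1 \<le> k \<and> tau_defined n G1 \<tau> \<beta> k}.
          wedge (root_vec n \<beta>) (root_vec n (\<lambda>m. - tau_pow n G1 \<tau> \<beta> k m)) a b c d))"

end

theory Submission
  imports Defs
begin

text \<open>The multiplication map \<open>m : A \<otimes> B \<mapsto> AB\<close> is equivariant for \<open>Ad\<^sub>X \<otimes> Ad\<^sub>X\<close>, so every
  \<open>X \<in> C(r\<^sub>B\<^sub>D)\<close> commutes with \<open>m(r\<^sub>B\<^sub>D)\<close>. This matrix is diagonal with pairwise distinct entries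
  \<open>c + (n - a)\<close>: the diagonal of \<open>r\<^sub>0\<close> is constant because \<open>r\<^sub>0 + r\<^sub>0\<^sup>2\<^sup>1 = \<Omega>\<^sub>0\<close>, and the
  terms \<open>e\<^sub>\<beta> \<and> e\<^bsub>-\<tau>\<^sup>k(\<beta>)\<^esub>\<close> contribute nothing since \<open>\<tau>\<^sup>k\<close> preserves the height of \<open>\<beta>\<close> but never
  fixes \<open>\<beta>\<close> (the admissibility condition). Hence \<open>X = diag(t)\<close>. Such an \<open>X\<close> scales
  \<open>e\<^sub>\<gamma> \<otimes> e\<^sub>\<delta>\<close> by the character \<open>t\<^sup>\<gamma>\<^sup>+\<^sup>\<delta>\<close>. The coefficient of \<open>e\<^bsub>\<alpha>\<^sub>i\<^esub> \<otimes> e\<^bsub>-\<alpha>\<^bsub>\<tau>(i)\<^esub>\<^esub>\<close> in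
  \<open>r\<^sub>B\<^sub>D\<close> is \<open>1\<close>, which forces \<open>s\<^sub>i = s\<^bsub>\<tau>(i)\<^esub>\<close> for \<open>s\<^sub>i = t\<^sub>i / t\<^bsub>i+1\<^esub>\<close>. Conversely, under
  this condition \<open>\<tau>\<^sup>k(\<beta>)\<close> and \<open>\<beta>\<close> have the same character, so every term of \<open>r\<^sub>B\<^sub>D\<close> has weight
  \<open>1\<close>.\<close>

section \<open>Roots in \<open>\<epsilon>\<close>- and \<open>\<alpha>\<close>-coordinates\<close>

definition height :: "nat \<Rightarrow> (nat \<Rightarrow> int) \<Rightarrow> int" where
  "height n c = (\<Sum>i\<in>{1..<n}. c i)"

lemma root_vec_apply:
  "root_vec n \<gamma> x y =
     (if x \<in> {1..n} \<and> y \<in> {1..n} \<and> x \<noteq> y \<and> \<gamma> = (\<lambda>m. eps x m - eps y m) then 1 else 0)"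
proof -
  let ?S = "{(a,b). a \<in> {1..n} \<and> b \<in> {1..n} \<and> a \<noteq> b \<and> \<gamma> = (\<lambda>m. eps a m - eps b m)}"
  have "finite ?S" by (rule finite_subset[of _ "{1..n} \<times> {1..n}"]) auto
  moreover have "root_vec n \<gamma> x y = (\<Sum>p\<in>?S. if p = (x,y) then 1 else 0)"
    unfolding root_vec_def emat_def by (intro sum.cong) (auto split: if_splits)
  ultimately show ?thesis by (simp add: sum.delta')
qed

lemma eps_diff_inj:
  assumes "a \<noteq> b" "(\<lambda>m. eps a m - eps b m) = (\<lambda>m. eps c m - eps d m)"
  shows "a = c \<and> b = d"
proof -
  have "eps a a - eps b a = eps c a - eps d a" "eps a b - eps b b = eps c b - eps d b"
    using assms(2) by metis+
  then show ?thesis using assms(1) unfolding eps_def by (auto split: if_splits)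
qed

lemma supp_in_mono: "supp_in c A \<Longrightarrow> A \<subseteq> B \<Longrightarrow> supp_in c B"
  unfolding supp_in_def by auto

lemma root_of_eps:
  assumes "j \<in> {1..<n}" shows "root_of n (eps j) = alpha j"
proof
  fix m
  have "root_of n (eps j) m = (\<Sum>i\<in>{1..<n}. if i = j then alpha i m else 0)"
    unfolding root_of_def eps_def by (intro sum.cong) auto
  then show "root_of n (eps j) m = alpha j m" using assms by (simp add: sum.delta)
qed

lemma root_of_Suc:
  assumes "supp_in c {1..<n}"
  shows "root_of n c (Suc m) = c (Suc m) - c m"
proof -
  have out: "c i = 0" if "i \<notin> {1..<n}" for i using assms that unfolding supp_in_def by blast
  have "root_of n c (Suc m) = (\<Sum>i\<in>{1..<n}. if i = Suc m then c i else 0) - (\<Sum>i\<in>{1..<n}. if i = m then c i else 0)"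
    unfolding root_of_def alpha_def eps_def sum_subtractf[symmetric]
    by (intro sum.cong) (auto simp: algebra_simps)
  then show ?thesis by (auto simp: sum.delta out)
qed

lemma coeff_eq_sum_root_of:
  assumes "supp_in c {1..<n}"
  shows "c m = (\<Sum>p\<in>{1..m}. root_of n c p)"
proof (induction m)
  case 0
  then show ?case using assms unfolding supp_in_def by force
next
  case (Suc m)
  then show ?case using root_of_Suc[OF assms] by simp
qed

lemma root_of_inj:
  assumes "supp_in c {1..<n}" "supp_in c' {1..<n}" "root_of n c = root_of n c'"
  shows "c = c'"
  using coeff_eq_sum_root_of[OF assms(1)] coeff_eq_sum_root_of[OF assms(2)] assms(3) by auto

lemma coeff_of_eps_diff:
  assumes "supp_in c {1..<n}" "root_of n c = (\<lambda>m. eps u m - eps v m)" "u \<ge> 1" "v \<ge> 1"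
  shows "c i = (if u \<le> i then 1 else 0) - (if v \<le> i then 1 else 0)"
proof -
  have "c i = (\<Sum>p\<in>{1..i}. eps u p) - (\<Sum>p\<in>{1..i}. eps v p)"
    using coeff_eq_sum_root_of[OF assms(1), of i] assms(2) by (simp add: sum_subtractf)
  then show ?thesis unfolding eps_def using assms(3,4) by (simp add: sum.delta')
qed

lemma height_eps_diff:
  assumes "supp_in c {1..<n}" "root_of n c = (\<lambda>m. eps u m - eps v m)" "u \<in> {1..n}" "v \<in> {1..n}"
  shows "height n c = int v - int u"
proof -
  have count: "(\<Sum>i\<in>{1..<n}. if w \<le> i then 1 else 0) = int n - int w" if "w \<in> {1..n}" for w
  proof -
    have "{i\<in>{1..<n}. w \<le> i} = {w..<n}" using that by auto
    then show ?thesis using that by (simp add: sum.inter_filter[symmetric])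
  qed
  have "height n c = (\<Sum>i\<in>{1..<n}. if u \<le> i then 1 else 0) - (\<Sum>i\<in>{1..<n}. if v \<le> i then 1 else 0)"
    unfolding height_def sum_subtractf[symmetric] using coeff_of_eps_diff[OF assms(1,2)] assms(3,4)
    by simp
  then show ?thesis using count assms(3,4) by simp
qed

section \<open>The linear extension of \<open>\<tau>\<close>\<close>

lemma supp_in_tau_lin: "supp_in (tau_lin G1 \<tau> c) (\<tau> ` G1)"
  unfolding supp_in_def tau_lin_def
proof (intro allI impI)
  fix j assume "(\<Sum>i\<in>{i \<in> G1. \<tau> i = j}. c i) \<noteq> 0"
  then have "{i \<in> G1. \<tau> i = j} \<noteq> {}" by (metis (no_types, lifting) sum.empty)
  then show "j \<in> \<tau> ` G1" by auto
qed

lemma tau_lin_apply_image: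
  assumes "inj_on \<tau> G1" "i \<in> G1"
  shows "tau_lin G1 \<tau> c (\<tau> i) = c i"
proof -
  have "{i' \<in> G1. \<tau> i' = \<tau> i} = {i}" using assms by (auto dest: inj_onD)
  then show ?thesis unfolding tau_lin_def by simp
qed

lemma tau_lin_eps:
  assumes "finite G1" "i \<in> G1"
  shows "tau_lin G1 \<tau> (eps i) = eps (\<tau> i)"
proof
  fix m
  have "finite {i' \<in> G1. \<tau> i' = m}" using assms(1) by simp
  then show "tau_lin G1 \<tau> (eps i) m = eps (\<tau> i) m"
    unfolding tau_lin_def eps_def using assms(2) by (auto simp: sum.delta)
qed

lemma height_tau_lin:
  assumes "finite G1" "G1 \<subseteq> {1..<n}" "\<tau> ` G1 \<subseteq> {1..<n}" "supp_in c G1"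
  shows "height n (tau_lin G1 \<tau> c) = height n c"
proof -
  have "height n (tau_lin G1 \<tau> c) = (\<Sum>j\<in>{1..<n}. \<Sum>i\<in>G1. if \<tau> i = j then c i else 0)"
    unfolding height_def tau_lin_def by (rule sum.cong[OF refl]) (simp add: sum.inter_filter[OF assms(1)])
  also have "\<dots> = (\<Sum>i\<in>G1. \<Sum>j\<in>{1..<n}. if \<tau> i = j then c i else 0)" by (rule sum.swap)
  also have "\<dots> = (\<Sum>i\<in>G1. c i)" using assms(3) by (intro sum.cong refl) (auto simp: sum.delta)
  also have "\<dots> = height n c"
    unfolding height_def using assms(2,4) unfolding supp_in_def by (intro sum.mono_neutral_left) auto
  finally show ?thesis .
qed

lemma height_tau_lin_pow:
  assumes "finite G1" "G1 \<subseteq> {1..<n}" "\<tau> ` G1 \<subseteq> {1..<n}"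
    and "\<forall>m<k. supp_in ((tau_lin G1 \<tau> ^^ m) c) G1"
  shows "height n ((tau_lin G1 \<tau> ^^ k) c) = height n c"
  using assms(4) by (induction k) (simp_all add: height_tau_lin[OF assms(1-3)])

lemma tau_lin_pow_apply_orbit:
  assumes "inj_on \<tau> G1" "c i \<noteq> 0" "\<forall>m'<m. supp_in ((tau_lin G1 \<tau> ^^ m') c) G1"
  shows "(tau_lin G1 \<tau> ^^ m) c ((\<tau> ^^ m) i) = c i"
  using assms(3)
proof (induction m)
  case (Suc m)
  then have IH: "(tau_lin G1 \<tau> ^^ m) c ((\<tau> ^^ m) i) = c i" by auto
  moreover have "(\<tau> ^^ m) i \<in> G1" using Suc.prems IH assms(2) unfolding supp_in_def by auto
  ultimately show ?case using tau_lin_apply_image[OF assms(1)] by simp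
qed simp

lemma orbit_in_G1:
  assumes "inj_on \<tau> G1" "c i \<noteq> 0" "\<forall>m'<k. supp_in ((tau_lin G1 \<tau> ^^ m') c) G1" "m < k"
  shows "(\<tau> ^^ m) i \<in> G1"
proof -
  have "(tau_lin G1 \<tau> ^^ m) c ((\<tau> ^^ m) i) \<noteq> 0"
    using tau_lin_pow_apply_orbit[of \<tau> G1 c i m] assms by auto
  moreover have "supp_in ((tau_lin G1 \<tau> ^^ m) c) G1" using assms(3,4) by blast
  ultimately show ?thesis unfolding supp_in_def by blast
qed

lemma tau_lin_pow_not_periodic:
  assumes orbits: "\<forall>i\<in>G1. \<exists>k. (\<tau> ^^ k) i \<notin> G1" and inj: "inj_on \<tau> G1"
    and "supp_in c G1" "c i \<noteq> 0" "k \<ge> 1"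
    and defined: "\<forall>m<k. supp_in ((tau_lin G1 \<tau> ^^ m) c) G1" and "(tau_lin G1 \<tau> ^^ k) c = c"
  shows False
proof -
  have all: "supp_in ((tau_lin G1 \<tau> ^^ m) c) G1" for m
  proof (induction m rule: less_induct)
    case (less m)
    show ?case
    proof (cases "m < k")
      case False
      then have "(tau_lin G1 \<tau> ^^ m) c = (tau_lin G1 \<tau> ^^ (m - k)) ((tau_lin G1 \<tau> ^^ k) c)"
        by (metis funpow_add le_add_diff_inverse2 not_less o_apply)
      moreover have "m - k < m" using False assms(5) by auto
      ultimately show ?thesis using less assms(7) by auto
    qed (use defined in blast)
  qed
  have "i \<in> G1" using assms(3,4) unfolding supp_in_def by blast
  then obtain j where "(\<tau> ^^ j) i \<notin> G1" using orbits by blast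
  then show False using orbit_in_G1[of \<tau> G1 c i "Suc j" j] inj assms(4) all by auto
qed

lemma coeffs_lattice:
  assumes "\<beta> \<in> lattice n G1" "G1 \<subseteq> {1..<n}"
  shows "supp_in (coeffs n G1 \<beta>) G1" "\<beta> = root_of n (coeffs n G1 \<beta>)"
proof -
  obtain c where c: "supp_in c G1" "\<beta> = root_of n c" using assms(1) unfolding lattice_def by auto
  have "\<exists>!c. supp_in c G1 \<and> \<beta> = root_of n c"
    using c by (intro ex1I[of _ c]) (auto intro: root_of_inj supp_in_mono[OF _ assms(2)])
  then have "supp_in (coeffs n G1 \<beta>) G1 \<and> \<beta> = root_of n (coeffs n G1 \<beta>)"
    unfolding coeffs_def by (rule theI')
  then show "supp_in (coeffs n G1 \<beta>) G1" "\<beta> = root_of n (coeffs n G1 \<beta>)" by auto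
qed

lemma admissibleD:
  assumes "admissible n G1 G2 \<tau>"
  shows "G1 \<subseteq> {1..<n}" "G2 \<subseteq> {1..<n}" "inj_on \<tau> G1" "\<tau> ` G1 = G2" "finite G1"
    "\<forall>i\<in>G1. \<exists>k. (\<tau> ^^ k) i \<notin> G1"
  using assms unfolding admissible_def bij_betw_def by (auto intro: finite_subset)

lemma supp_in_tau_lin_pow:
  assumes "admissible n G1 G2 \<tau>" "k \<ge> 1"
  shows "supp_in ((tau_lin G1 \<tau> ^^ k) c) {1..<n}"
proof -
  obtain k' where "k = Suc k'" using assms(2) by (cases k) auto
  then have "supp_in ((tau_lin G1 \<tau> ^^ k) c) (\<tau> ` G1)" using supp_in_tau_lin by simp
  then show ?thesis using admissibleD[OF assms(1)] by (auto intro: supp_in_mono)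
qed

lemma neg_eq_eps_diff_iff:
  "((\<lambda>m. - f m) = (\<lambda>m. eps u m - eps v m)) \<longleftrightarrow> f = (\<lambda>m. eps v m - eps u m)"
  by (auto simp: fun_eq_iff algebra_simps)

text \<open>Matching the shared index forces the other one through the height, so a nonzero product
  would give \<open>root_of n c = \<beta>\<close>.\<close>
lemma root_vec_mult_neg_root_of_eq_0:
  assumes c: "supp_in c {1..<n}" and \<beta>: "\<beta> = (\<lambda>m. eps a m - eps b m)"
    and ht: "height n c = int b - int a" and ne: "root_of n c \<noteq> \<beta>"
  shows "root_vec n \<beta> x y * root_vec n (\<lambda>m. - root_of n c m) y z = (0::'a::comm_ring_1)"
    "root_vec n (\<lambda>m. - root_of n c m) x y * root_vec n \<beta> y z = (0::'a::comm_ring_1)"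
proof (rule ccontr)
  assume "root_vec n \<beta> x y * root_vec n (\<lambda>m. - root_of n c m) y z \<noteq> (0::'a)"
  then have x: "x \<in> {1..n}" "x \<noteq> y" "\<beta> = (\<lambda>m. eps x m - eps y m)"
    and z: "y \<in> {1..n}" "z \<in> {1..n}" "root_of n c = (\<lambda>m. eps z m - eps y m)"
    by (auto simp: root_vec_apply neg_eq_eps_diff_iff split: if_splits)
  have "x = a" "y = b" using eps_diff_inj[OF x(2)] x(3) \<beta> by metis+
  moreover have "height n c = int y - int z" using height_eps_diff[OF c z(3) z(2,1)] .
  ultimately show False using ht ne z(3) \<beta> by simp
next
  show "root_vec n (\<lambda>m. - root_of n c m) x y * root_vec n \<beta> y z = (0::'a)"
  proof (rule ccontr)
    assume "root_vec n (\<lambda>m. - root_of n c m) x y * root_vec n \<beta> y z \<noteq> (0::'a)"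
    then have z: "y \<noteq> z" "\<beta> = (\<lambda>m. eps y m - eps z m)"
      and x: "x \<in> {1..n}" "y \<in> {1..n}" "root_of n c = (\<lambda>m. eps y m - eps x m)"
      by (auto simp: root_vec_apply neg_eq_eps_diff_iff split: if_splits)
    have "y = a" "z = b" using eps_diff_inj[OF z(1)] z(2) \<beta> by metis+
    moreover have "height n c = int x - int y" using height_eps_diff[OF c x(3) x(2,1)] .
    ultimately show False using ht ne x(3) \<beta> by simp
  qed
qed

lemma tau_pow_height_neq:
  assumes adm: "admissible n G1 G2 \<tau>" and \<beta>: "\<beta> \<in> posroots n \<inter> lattice n G1"
    and k: "k \<ge> 1" "tau_defined n G1 \<tau> \<beta> k"
  shows "height n ((tau_lin G1 \<tau> ^^ k) (coeffs n G1 \<beta>)) = height n (coeffs n G1 \<beta>)"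
    "tau_pow n G1 \<tau> \<beta> k \<noteq> \<beta>"
proof -
  note af = admissibleD[OF adm]
  define c where "c = coeffs n G1 \<beta>"
  have c: "supp_in c G1" "\<beta> = root_of n c"
    using coeffs_lattice[of \<beta> n G1] \<beta> af(1) unfolding c_def by auto
  have defined: "\<forall>m<k. supp_in ((tau_lin G1 \<tau> ^^ m) c) G1"
    using k(2) unfolding tau_defined_def c_def by simp
  have "\<tau> ` G1 \<subseteq> {1..<n}" using af(2,4) by simp
  from height_tau_lin_pow[OF af(5,1) this defined]
  show "height n ((tau_lin G1 \<tau> ^^ k) (coeffs n G1 \<beta>)) = height n (coeffs n G1 \<beta>)"
    unfolding c_def .
  show "tau_pow n G1 \<tau> \<beta> k \<noteq> \<beta>"
  proof
    assume "tau_pow n G1 \<tau> \<beta> k = \<beta>"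
    then have "root_of n ((tau_lin G1 \<tau> ^^ k) c) = root_of n c"
      unfolding tau_pow_def c_def[symmetric] using c(2) by simp
    then have periodic: "(tau_lin G1 \<tau> ^^ k) c = c"
      using root_of_inj[OF supp_in_tau_lin_pow[OF adm k(1)] supp_in_mono[OF c(1) af(1)]] by blast
    obtain a b where "a < b" "\<beta> = (\<lambda>m. eps a m - eps b m)"
      using \<beta> unfolding posroots_def by auto
    then have "\<beta> a \<noteq> 0" by (simp add: eps_def)
    then have "c \<noteq> (\<lambda>_. 0)" using c(2) unfolding root_of_def by auto
    then obtain i where "c i \<noteq> 0" by auto
    then show False using tau_lin_pow_not_periodic[OF af(6,3) c(1) _ k(1) defined periodic] by blast
  qed
qed

lemma root_vec_mult_neg_tau_pow_eq_0:
  assumes adm: "admissible n G1 G2 \<tau>" and \<beta>: "\<beta> \<in> posroots n \<inter> lattice n G1"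
    and k: "k \<ge> 1" "tau_defined n G1 \<tau> \<beta> k"
  shows "root_vec n \<beta> x y * root_vec n (\<lambda>m. - tau_pow n G1 \<tau> \<beta> k m) y z = (0::'a::comm_ring_1)"
    "root_vec n (\<lambda>m. - tau_pow n G1 \<tau> \<beta> k m) x y * root_vec n \<beta> y z = (0::'a::comm_ring_1)"
proof -
  note af = admissibleD[OF adm]
  obtain a b where "1 \<le> a" "a < b" "b \<le> n" and ab: "\<beta> = (\<lambda>m. eps a m - eps b m)"
    using \<beta> unfolding posroots_def by blast
  then have ab_range: "a \<in> {1..n}" "b \<in> {1..n}" by auto
  have c: "supp_in (coeffs n G1 \<beta>) {1..<n}" "root_of n (coeffs n G1 \<beta>) = \<beta>"
    using coeffs_lattice[of \<beta> n G1] \<beta> af(1) by (auto intro: supp_in_mono)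
  have "height n ((tau_lin G1 \<tau> ^^ k) (coeffs n G1 \<beta>)) = int b - int a"
    using tau_pow_height_neq(1)[OF assms] height_eps_diff[OF c(1) trans[OF c(2) ab] ab_range] by simp
  from root_vec_mult_neg_root_of_eq_0[OF supp_in_tau_lin_pow[OF adm k(1)] ab this]
  show "root_vec n \<beta> x y * root_vec n (\<lambda>m. - tau_pow n G1 \<tau> \<beta> k m) y z = (0::'a)"
    "root_vec n (\<lambda>m. - tau_pow n G1 \<tau> \<beta> k m) x y * root_vec n \<beta> y z = (0::'a)"
    using tau_pow_height_neq(2)[OF assms] unfolding tau_pow_def by auto
qed

section \<open>Matrices and the multiplication map\<close>

lemma mat_mult_assoc: "mat_mult n (mat_mult n A B) C = mat_mult n A (mat_mult n B C)"
  unfolding mat_mult_def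
  by (auto simp: sum_distrib_left sum_distrib_right mult.assoc intro!: ext sum.swap[THEN trans] sum.cong)

lemma mat_mult_id_right: "j \<in> {1..n} \<Longrightarrow> mat_mult n A (mat_id n) i j = A i j"
proof -
  have "mat_mult n A (mat_id n) i j = (\<Sum>k\<in>{1..n}. if k = j then A i k else 0)"
    unfolding mat_mult_def mat_id_def by (intro sum.cong) auto
  then show "j \<in> {1..n} \<Longrightarrow> ?thesis" by (simp add: sum.delta)
qed

lemma mat_mult_id_left: "i \<in> {1..n} \<Longrightarrow> mat_mult n (mat_id n) A i j = A i j"
proof -
  have "mat_mult n (mat_id n) A i j = (\<Sum>k\<in>{1..n}. if k = i then A k j else 0)"
    unfolding mat_mult_def mat_id_def by (intro sum.cong) auto
  then show "i \<in> {1..n} \<Longrightarrow> ?thesis" by (simp add: sum.delta)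
qed

lemma is_mat_mat_mult_id_right:
  assumes "is_mat n A" shows "mat_mult n A (mat_id n) = A"
proof (intro ext)
  fix i j show "mat_mult n A (mat_id n) i j = A i j"
    using mat_mult_id_right[of j n A i] assms unfolding is_mat_def mat_mult_def mat_id_def
    by (cases "j \<in> {1..n}") auto
qed

lemma is_mat_mat_mult_id_left:
  assumes "is_mat n A" shows "mat_mult n (mat_id n) A = A"
proof (intro ext)
  fix i j show "mat_mult n (mat_id n) A i j = A i j"
    using mat_mult_id_left[of i n A j] assms unfolding is_mat_def mat_mult_def mat_id_def
    by (cases "i \<in> {1..n}") auto
qed

lemma inverse_pair_unique:
  assumes "inverse_pair n P Q" "inverse_pair n P Q'"
  shows "Q = Q'"
proof -
  have "Q = mat_mult n Q (mat_id n)"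
    using assms(1) is_mat_mat_mult_id_right unfolding inverse_pair_def by metis
  also have "\<dots> = mat_mult n (mat_mult n Q P) Q'"
    using assms(2) unfolding inverse_pair_def by (simp add: mat_mult_assoc)
  also have "\<dots> = Q'" using assms is_mat_mat_mult_id_left unfolding inverse_pair_def by metis
  finally show ?thesis .
qed

lemma GL_inverse_pair: "P \<in> GL n \<Longrightarrow> inverse_pair n P (mat_inv n P)"
proof -
  assume "P \<in> GL n"
  then have "\<exists>!Q. inverse_pair n P Q" unfolding GL_def using inverse_pair_unique by blast
  then show ?thesis unfolding mat_inv_def by (rule theI')
qed

lemma Ad_emat:
  assumes "i \<in> {1..n}" "j \<in> {1..n}"
  shows "Ad n P (emat i j) a b = P a i * mat_inv n P j b"
proof -
  have PE: "mat_mult n P (emat i j) a c = (if c = j then P a i else 0)" for c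
    unfolding mat_mult_def emat_def using assms(1) by (auto simp: if_distrib sum.delta cong: if_cong)
  have "Ad n P (emat i j) a b = (\<Sum>c\<in>{1..n}. if c = j then P a i * mat_inv n P c b else 0)"
    unfolding Ad_def mat_mult_def[of n "mat_mult n P (emat i j)"] by (intro sum.cong) (auto simp: PE)
  then show ?thesis using assms(2) by (simp add: sum.delta)
qed

lemma Ad2_apply:
  "Ad2 n P T a b c d = (\<Sum>i\<in>{1..n}. \<Sum>j\<in>{1..n}. \<Sum>k\<in>{1..n}. \<Sum>l\<in>{1..n}.
      T i j k l * (P a i * mat_inv n P j b) * (P c k * mat_inv n P l d))"
  unfolding Ad2_def tensor_def by (intro sum.cong refl) (simp add: Ad_emat)

definition tens_mult :: "nat \<Rightarrow> 'a::comm_ring_1 tens \<Rightarrow> 'a sqmat" where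
  "tens_mult n T = (\<lambda>a d. \<Sum>b\<in>{1..n}. T a b b d)"

lemma sum_swap_outermost_4:
  "(\<Sum>b\<in>A. \<Sum>i\<in>A. \<Sum>j\<in>A. \<Sum>k\<in>A. \<Sum>l\<in>A. f b i j k l) =
   (\<Sum>i\<in>A. \<Sum>j\<in>A. \<Sum>k\<in>A. \<Sum>l\<in>A. \<Sum>b\<in>A. f b i j k l)"
proof -
  have "(\<Sum>b\<in>A. \<Sum>i\<in>A. \<Sum>j\<in>A. \<Sum>k\<in>A. \<Sum>l\<in>A. f b i j k l) =
        (\<Sum>i\<in>A. \<Sum>b\<in>A. \<Sum>j\<in>A. \<Sum>k\<in>A. \<Sum>l\<in>A. f b i j k l)" by (rule sum.swap)
  also have "\<dots> = (\<Sum>i\<in>A. \<Sum>j\<in>A. \<Sum>b\<in>A. \<Sum>k\<in>A. \<Sum>l\<in>A. f b i j k l)"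
    by (intro sum.cong refl sum.swap)
  also have "\<dots> = (\<Sum>i\<in>A. \<Sum>j\<in>A. \<Sum>k\<in>A. \<Sum>b\<in>A. \<Sum>l\<in>A. f b i j k l)"
    by (intro sum.cong refl sum.swap)
  also have "\<dots> = (\<Sum>i\<in>A. \<Sum>j\<in>A. \<Sum>k\<in>A. \<Sum>l\<in>A. \<Sum>b\<in>A. f b i j k l)"
    by (intro sum.cong refl sum.swap)
  finally show ?thesis .
qed

lemma tens_mult_Ad2:
  assumes "P \<in> GL n"
  shows "tens_mult n (Ad2 n P T) = Ad n P (tens_mult n T)"
proof (intro ext)
  fix a d
  let ?A = "{1..n::nat}" and ?Q = "mat_inv n P"
  have QP: "(\<Sum>b\<in>?A. ?Q j b * P b k) = (if j = k then 1 else 0)" if "j \<in> ?A" "k \<in> ?A" for j k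
  proof -
    have "mat_mult n ?Q P j k = mat_id n j k"
      using GL_inverse_pair[OF assms] unfolding inverse_pair_def by simp
    then show ?thesis unfolding mat_mult_def mat_id_def using that by auto
  qed
  have "tens_mult n (Ad2 n P T) a d
      = (\<Sum>i\<in>?A. \<Sum>j\<in>?A. \<Sum>k\<in>?A. \<Sum>l\<in>?A. (T i j k l * P a i * ?Q l d) * (\<Sum>b\<in>?A. ?Q j b * P b k))"
    unfolding tens_mult_def Ad2_apply
    by (subst sum_swap_outermost_4) (intro sum.cong refl, simp add: sum_distrib_left mult_ac)
  also have "\<dots> = (\<Sum>i\<in>?A. \<Sum>j\<in>?A. \<Sum>k\<in>?A. if j = k then (\<Sum>l\<in>?A. T i j k l * P a i * ?Q l d) else 0)"
    using QP by (intro sum.cong refl) (auto simp: sum_distrib_right[symmetric])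
  also have "\<dots> = (\<Sum>i\<in>?A. \<Sum>j\<in>?A. \<Sum>l\<in>?A. T i j j l * P a i * ?Q l d)"
    by (simp add: sum.delta)
  also have "\<dots> = (\<Sum>i\<in>?A. \<Sum>l\<in>?A. \<Sum>j\<in>?A. T i j j l * P a i * ?Q l d)"
    by (intro sum.cong refl sum.swap)
  also have "\<dots> = Ad n P (tens_mult n T) a d"
    unfolding Ad_def mat_mult_def tens_mult_def
    by (subst sum.swap) (simp add: sum_distrib_left sum_distrib_right mult_ac)
  finally show "tens_mult n (Ad2 n P T) a d = Ad n P (tens_mult n T) a d" .
qed

lemma mat_mult_Ad:
  assumes "P \<in> GL n" "b \<in> {1..n}"
  shows "mat_mult n (Ad n P A) P a b = mat_mult n P A a b"
proof -
  have "mat_mult n (Ad n P A) P = mat_mult n (mat_mult n P A) (mat_mult n (mat_inv n P) P)"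
    unfolding Ad_def by (simp add: mat_mult_assoc)
  then show ?thesis
    using GL_inverse_pair[OF assms(1)] mat_mult_id_right[OF assms(2)] unfolding inverse_pair_def by simp
qed

text \<open>By equivariance of \<open>m\<close>, \<open>P\<close> commutes with the diagonal matrix \<open>m(F)\<close>.\<close>
lemma Ad2_fixed_entry_eq_0:
  assumes P: "P \<in> GL n" and fixed: "Ad2 n P F = F"
    and diag: "\<And>i l. i \<in> {1..n} \<Longrightarrow> l \<in> {1..n} \<Longrightarrow> tens_mult n F i l = (if i = l then \<mu> i else 0)"
    and a: "a \<in> {1..n}" and b: "b \<in> {1..n}"
  shows "(\<mu> a - \<mu> b) * P a b = 0"
proof -
  let ?M = "tens_mult n F"
  have "mat_mult n ?M P a b = mat_mult n P ?M a b"
    using mat_mult_Ad[OF P b, of ?M] tens_mult_Ad2[OF P, of F] fixed by simp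
  moreover have "mat_mult n ?M P a b = (\<Sum>k\<in>{1..n}. if k = a then \<mu> a * P a b else 0)"
    unfolding mat_mult_def using a by (intro sum.cong) (auto simp: diag)
  moreover have "mat_mult n P ?M a b = (\<Sum>k\<in>{1..n}. if k = b then P a b * \<mu> b else 0)"
    unfolding mat_mult_def using b by (intro sum.cong) (auto simp: diag)
  ultimately show ?thesis using a b by (simp add: sum.delta algebra_simps)
qed

section \<open>Elements of \<open>C(r\<^sub>B\<^sub>D)\<close> are diagonal\<close>

definition r_std :: "nat \<Rightarrow> 'a::comm_ring_1 tens" where
  "r_std n = (\<lambda>a b c d. \<Sum>(i,k)\<in>{(i,k). 1 \<le> i \<and> i < k \<and> k \<le> n}. tensor (emat i k) (emat k i) a b c d)"

definition r_tau :: "nat \<Rightarrow> nat set \<Rightarrow> (nat \<Rightarrow> nat) \<Rightarrow> 'a::comm_ring_1 tens" where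
  "r_tau n G1 \<tau> = (\<lambda>a b c d. \<Sum>\<beta>\<in>posroots n \<inter> lattice n G1. \<Sum>k\<in>{k. 1 \<le> k \<and> tau_defined n G1 \<tau> \<beta> k}.
     wedge (root_vec n \<beta>) (root_vec n (\<lambda>m. - tau_pow n G1 \<tau> \<beta> k m)) a b c d)"

lemma r_BD_apply: "r_BD n G1 \<tau> r0 a b c d = r0 a b c d + r_std n a b c d + r_tau n G1 \<tau> a b c d"
  unfolding r_BD_def r_std_def r_tau_def by simp

lemma r_std_apply:
  "r_std n x y z w = (if 1 \<le> x \<and> x < y \<and> y \<le> n \<and> z = y \<and> w = x then 1 else 0)"
proof -
  let ?S = "{(i,k). 1 \<le> i \<and> i < k \<and> k \<le> n}"
  have "finite ?S" by (rule finite_subset[of _ "{1..n} \<times> {1..n}"]) auto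
  moreover have "r_std n x y z w = (\<Sum>p\<in>?S. if p = (x,y) then (if z = y \<and> w = x then 1 else 0) else 0)"
    unfolding r_std_def tensor_def emat_def by (intro sum.cong) (auto split: if_splits)
  ultimately show ?thesis by (auto simp: sum.delta')
qed

lemma r_tau_outside:
  assumes "\<not> (x \<in> {1..n} \<and> y \<in> {1..n} \<and> z \<in> {1..n} \<and> w \<in> {1..n})"
  shows "r_tau n G1 \<tau> x y z w = 0"
  unfolding r_tau_def wedge_def tensor_def using assms
  by (intro sum.neutral ballI) (auto simp: root_vec_apply)

lemma tens_mult_r_tau:
  assumes "admissible n G1 G2 \<tau>"
  shows "tens_mult n (r_tau n G1 \<tau>) = (\<lambda>_ _. 0)"
  unfolding tens_mult_def r_tau_def wedge_def tensor_def
  by (intro ext sum.neutral ballI) (auto simp: root_vec_mult_neg_tau_pow_eq_0[OF assms])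

lemma in_hh_offdiag:
  assumes "in_hh n r0" "x \<noteq> y \<or> z \<noteq> w"
  shows "r0 x y z w = 0"
  using assms unfolding in_hh_def tensor_def emat_def by (auto intro!: sum.neutral)

lemma in_hh_outside:
  assumes "in_hh n r0" "\<not> (x \<in> {1..n} \<and> y \<in> {1..n} \<and> z \<in> {1..n} \<and> w \<in> {1..n})"
  shows "r0 x y z w = 0"
  using assms unfolding in_hh_def tensor_def emat_def by (auto intro!: sum.neutral)

lemma tens_mult_r_BD:
  assumes adm: "admissible n G1 G2 \<tau>" and hh: "in_hh n r0" and a: "a \<in> {1..n}"
  shows "tens_mult n (r_BD n G1 \<tau> r0) a d = (if a = d then r0 a a a a + of_nat (n - a) else 0)"
proof -
  let ?A = "{1..n::nat}"
  have "tens_mult n (r_BD n G1 \<tau> r0) a d = (\<Sum>j\<in>?A. r0 a j j d) + (\<Sum>j\<in>?A. r_std n a j j d)"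
    using fun_cong[OF fun_cong[OF tens_mult_r_tau[OF adm]], of a d]
    unfolding tens_mult_def r_BD_apply by (simp add: sum.distrib)
  also have "(\<Sum>j\<in>?A. r0 a j j d) = (\<Sum>j\<in>?A. if j = a then r0 a a a d else 0)"
    by (intro sum.cong refl) (auto simp: in_hh_offdiag[OF hh])
  also have "(\<Sum>j\<in>?A. r_std n a j j d) = (\<Sum>j\<in>?A. if a < j \<and> d = a then 1 else 0)"
    using a by (intro sum.cong refl) (auto simp: r_std_apply)
  also have "\<dots> = (if d = a then of_nat (card {a<..n}) else 0)"
  proof -
    have "{j\<in>?A. a < j} = {a<..n}" using a by auto
    then show ?thesis by (auto simp: sum.inter_filter[symmetric])
  qed
  finally show ?thesis using a in_hh_offdiag[OF hh, of a a a d] by (auto simp: sum.delta)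
qed

lemma r0_diag_entry_eq:
  fixes r0 :: "'a::field_char_0 tens"
  assumes om: "\<forall>a b c d. r0 a b c d + flip21 r0 a b c d = Omega0 n a b c d"
    and a: "a \<in> {1..n}"
  shows "r0 a a a a = (1 - 1 / of_nat n) / 2"
proof -
  have "(\<Sum>i\<in>{1..n}. tensor (emat i i) (emat i i) a a a a) = (\<Sum>i\<in>{1..n}. if i = a then (1::'a) else 0)"
    unfolding tensor_def emat_def by (intro sum.cong) auto
  then have "Omega0 n a a a a = (1 - 1 / of_nat n :: 'a)"
    unfolding Omega0_def using a by (simp add: tensor_def mat_id_def sum.delta)
  moreover have "r0 a a a a + r0 a a a a = Omega0 n a a a a" using om unfolding flip21_def by blast
  ultimately show ?thesis by (simp add: field_simps)
qed

lemma diag_mat_mult: "mat_mult n (diag_mat n t) (diag_mat n u) = diag_mat n (\<lambda>i. t i * u i)"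
proof (intro ext)
  fix i j
  have "mat_mult n (diag_mat n t) (diag_mat n u) i j
      = (\<Sum>k\<in>{1..n}. if k = i then (if i = j \<and> i \<in> {1..n} then t i * u i else 0) else 0)"
    unfolding mat_mult_def diag_mat_def by (intro sum.cong) auto
  then show "mat_mult n (diag_mat n t) (diag_mat n u) i j = diag_mat n (\<lambda>i. t i * u i) i j"
    unfolding diag_mat_def by (simp add: sum.delta)
qed

lemma is_mat_diag_mat: "is_mat n (diag_mat n t)"
  unfolding is_mat_def diag_mat_def by auto

lemma inverse_pair_diag_mat:
  fixes t :: "nat \<Rightarrow> 'a::field"
  assumes "\<forall>i\<in>{1..n}. t i \<noteq> 0"
  shows "inverse_pair n (diag_mat n t) (diag_mat n (\<lambda>i. inverse (t i)))"
proof -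
  have "diag_mat n (\<lambda>i. t i * inverse (t i)) = mat_id n" "diag_mat n (\<lambda>i. inverse (t i) * t i) = mat_id n"
    unfolding diag_mat_def mat_id_def using assms by (auto intro!: ext)
  then show ?thesis unfolding inverse_pair_def by (simp add: diag_mat_mult is_mat_diag_mat)
qed

lemma diag_mat_in_GL:
  fixes t :: "nat \<Rightarrow> 'a::field"
  shows "\<forall>i\<in>{1..n}. t i \<noteq> 0 \<Longrightarrow> diag_mat n t \<in> GL n"
  unfolding GL_def using inverse_pair_diag_mat is_mat_diag_mat by blast

lemma mat_inv_diag_mat:
  fixes t :: "nat \<Rightarrow> 'a::field"
  assumes "\<forall>i\<in>{1..n}. t i \<noteq> 0"
  shows "mat_inv n (diag_mat n t) = diag_mat n (\<lambda>i. inverse (t i))"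
  using inverse_pair_unique[OF GL_inverse_pair[OF diag_mat_in_GL[OF assms]] inverse_pair_diag_mat[OF assms]] .

lemma Ad2_diag_mat:
  fixes t :: "nat \<Rightarrow> 'a::field"
  assumes "\<forall>i\<in>{1..n}. t i \<noteq> 0"
  shows "Ad2 n (diag_mat n t) T a b c d =
    (if a \<in> {1..n} \<and> b \<in> {1..n} \<and> c \<in> {1..n} \<and> d \<in> {1..n}
     then T a b c d * (t a * inverse (t b)) * (t c * inverse (t d)) else 0)"
proof -
  let ?A = "{1..n::nat}"
  let ?V = "if a \<in> ?A \<and> b \<in> ?A \<and> c \<in> ?A \<and> d \<in> ?A
     then T a b c d * (t a * inverse (t b)) * (t c * inverse (t d)) else 0"
  have "Ad2 n (diag_mat n t) T a b c d = (\<Sum>i\<in>?A. \<Sum>j\<in>?A. \<Sum>k\<in>?A. \<Sum>l\<in>?A.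
      if i = a then (if j = b then (if k = c then (if l = d then ?V else 0) else 0) else 0) else 0)"
    unfolding Ad2_apply mat_inv_diag_mat[OF assms]
    by (intro sum.cong refl) (auto simp: diag_mat_def)
  also have "\<dots> = ?V"
  proof -
    have sum_if: "(\<Sum>x\<in>?A. if Q then f x else 0) = (if Q then sum f ?A else 0)" for Q and f :: "nat \<Rightarrow> 'a"
      by simp
    show ?thesis by (simp only: sum_if sum.delta finite_atLeastAtMost) auto
  qed
  finally show ?thesis .
qed

lemma GL_diag_mat_of_offdiag_eq_0:
  assumes P: "P \<in> GL n" and offdiag: "\<forall>a\<in>{1..n}. \<forall>b\<in>{1..n}. a \<noteq> b \<longrightarrow> P a b = 0"
  shows "P = diag_mat n (\<lambda>i. P i i)" "\<forall>i\<in>{1..n}. P i i \<noteq> 0"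
proof -
  show "P = diag_mat n (\<lambda>i. P i i)"
  proof (rule ext, rule ext)
    fix a b show "P a b = diag_mat n (\<lambda>i. P i i) a b"
    proof (cases "a \<in> {1..n} \<and> b \<in> {1..n}")
      case False
      moreover have "is_mat n P" using P unfolding GL_def by simp
      ultimately have "P a b = 0" unfolding is_mat_def by blast
      then show ?thesis using False unfolding diag_mat_def by auto
    next
      case True
      then show ?thesis using offdiag unfolding diag_mat_def by (cases "a = b") simp_all
    qed
  qed
  show "\<forall>i\<in>{1..n}. P i i \<noteq> 0"
  proof
    fix p assume p: "p \<in> {1..n}"
    have "mat_mult n P (mat_inv n P) p p = 1"
      using GL_inverse_pair[OF P] p unfolding inverse_pair_def mat_id_def by simp
    moreover have "mat_mult n P (mat_inv n P) p p = P p p * mat_inv n P p p"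
      unfolding mat_mult_def using p offdiag by (subst sum.remove[of _ p]) (auto intro!: sum.neutral)
    ultimately show "P p p \<noteq> 0" by auto
  qed
qed

text \<open>The diagonal entries \<open>const + (n - a)\<close> of \<open>m(r\<^sub>B\<^sub>D)\<close> are pairwise distinct.\<close>
lemma Cent_r_BD_offdiag_eq_0:
  fixes r0 :: "'a::field_char_0 tens"
  assumes adm: "admissible n G1 G2 \<tau>" and hh: "in_hh n r0"
    and om: "\<forall>a b c d. r0 a b c d + flip21 r0 a b c d = Omega0 n a b c d"
    and P: "P \<in> Cent n (r_BD n G1 \<tau> r0)"
  shows "\<forall>a\<in>{1..n}. \<forall>b\<in>{1..n}. a \<noteq> b \<longrightarrow> P a b = 0"
proof (intro ballI impI)
  fix a b assume a: "a \<in> {1..n}" and b: "b \<in> {1..n}" and "a \<noteq> b"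
  define \<mu> where "\<mu> = (\<lambda>a. (1 - 1 / of_nat n) / 2 + of_nat (n - a) :: 'a)"
  have "tens_mult n (r_BD n G1 \<tau> r0) i l = (if i = l then \<mu> i else 0)" if "i \<in> {1..n}" for i l
    using that by (simp add: tens_mult_r_BD[OF adm hh] r0_diag_entry_eq[OF om] \<mu>_def)
  then have "(\<mu> a - \<mu> b) * P a b = 0"
    using P a b unfolding Cent_def by (intro Ad2_fixed_entry_eq_0[of P n]) auto
  moreover have "\<mu> a \<noteq> \<mu> b"
  proof
    assume "\<mu> a = \<mu> b"
    then have "(of_nat (n - a) :: 'a) = of_nat (n - b)" unfolding \<mu>_def by simp
    then have "n - a = n - b" by (rule of_nat_eq_iff[THEN iffD1])
    then show False using a b \<open>a \<noteq> b\<close> by auto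
  qed
  ultimately show "P a b = 0" by simp
qed

section \<open>The condition on a diagonal element of \<open>C(r\<^sub>B\<^sub>D)\<close>\<close>

lemma alpha_inj: "alpha i = alpha j \<Longrightarrow> i = j"
  using eps_diff_inj[of i "Suc i" j "Suc j"] unfolding alpha_def by simp

lemma supp_in_eps_iff: "supp_in (eps j) S \<longleftrightarrow> j \<in> S"
  unfolding supp_in_def eps_def by auto

lemma simple_root_in_posroots_lattice:
  assumes adm: "admissible n G1 G2 \<tau>" and i: "i \<in> G1"
  shows "alpha i \<in> posroots n \<inter> lattice n G1" "coeffs n G1 (alpha i) = eps i"
proof -
  note af = admissibleD[OF adm]
  have i1: "i \<in> {1..<n}" using af(1) i by auto
  have "1 \<le> i" "i < Suc i" "Suc i \<le> n" using i1 by auto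
  then have "alpha i \<in> posroots n" unfolding posroots_def alpha_def by blast
  moreover have "supp_in (eps i) G1" using i by (simp add: supp_in_eps_iff)
  then have "alpha i \<in> lattice n G1"
    unfolding lattice_def using root_of_eps[OF i1] by (auto intro!: exI[of _ "eps i"])
  ultimately show mem: "alpha i \<in> posroots n \<inter> lattice n G1" by blast
  show "coeffs n G1 (alpha i) = eps i"
  proof (rule root_of_inj)
    show "supp_in (coeffs n G1 (alpha i)) {1..<n}"
      using coeffs_lattice(1)[OF IntD2[OF mem] af(1)] af(1) by (rule supp_in_mono)
    show "supp_in (eps i) {1..<n}" using i1 by (simp add: supp_in_eps_iff)
    show "root_of n (coeffs n G1 (alpha i)) = root_of n (eps i)"
      using coeffs_lattice(2)[OF IntD2[OF mem] af(1)] root_of_eps[OF i1] by simp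
  qed
qed

lemma tau_lin_pow_eps:
  assumes "finite G1" "\<forall>m<k. (\<tau> ^^ m) i \<in> G1"
  shows "(tau_lin G1 \<tau> ^^ k) (eps i) = eps ((\<tau> ^^ k) i)"
  using assms(2) by (induction k) (simp_all add: tau_lin_eps[OF assms(1)])

lemma tau_defined_simple_root_iff:
  assumes adm: "admissible n G1 G2 \<tau>" and i: "i \<in> G1"
  shows "tau_defined n G1 \<tau> (alpha i) k \<longleftrightarrow> (\<forall>m<k. (\<tau> ^^ m) i \<in> G1)"
proof -
  have "(\<forall>m<k. supp_in ((tau_lin G1 \<tau> ^^ m) (eps i)) G1) \<longleftrightarrow> (\<forall>m<k. (\<tau> ^^ m) i \<in> G1)"
  proof (induction k)
    case (Suc k)
    show ?case
    proof (cases "\<forall>m<k. (\<tau> ^^ m) i \<in> G1")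
      case True
      then have "supp_in ((tau_lin G1 \<tau> ^^ k) (eps i)) G1 \<longleftrightarrow> (\<tau> ^^ k) i \<in> G1"
        using tau_lin_pow_eps[OF admissibleD(5)[OF adm]] supp_in_eps_iff by metis
      then show ?thesis using Suc.IH True unfolding All_less_Suc by blast
    qed (use Suc.IH in \<open>auto simp add: All_less_Suc\<close>)
  qed simp
  then show ?thesis
    unfolding tau_defined_def simple_root_in_posroots_lattice(2)[OF adm i] .
qed

lemma tau_pow_simple_root:
  assumes adm: "admissible n G1 G2 \<tau>" and i: "i \<in> G1" and k: "k \<ge> 1" "\<forall>m<k. (\<tau> ^^ m) i \<in> G1"
  shows "tau_pow n G1 \<tau> (alpha i) k = alpha ((\<tau> ^^ k) i)"
proof -
  note af = admissibleD[OF adm]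
  obtain k' where k': "k = Suc k'" using k(1) by (cases k) auto
  then have "(\<tau> ^^ k) i \<in> G2" using k(2) af(4) by auto
  then have "(\<tau> ^^ k) i \<in> {1..<n}" using af(2) by auto
  then show ?thesis
    unfolding tau_pow_def simple_root_in_posroots_lattice(2)[OF adm i] tau_lin_pow_eps[OF af(5) k(2)]
    by (rule root_of_eps)
qed

lemma tau_pow_simple_root_eq_iff:
  assumes adm: "admissible n G1 G2 \<tau>" and i: "i \<in> G1" and k: "k \<ge> 1" "\<forall>m<k. (\<tau> ^^ m) i \<in> G1"
  shows "tau_pow n G1 \<tau> (alpha i) k = alpha (\<tau> i) \<longleftrightarrow> k = 1"
proof
  note af = admissibleD[OF adm]
  obtain k' where k': "k = Suc k'" using k(1) by (cases k) auto
  assume "tau_pow n G1 \<tau> (alpha i) k = alpha (\<tau> i)"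
  then have "\<tau> ((\<tau> ^^ k') i) = \<tau> i"
    using tau_pow_simple_root[OF assms] alpha_inj unfolding k' by simp
  then have returns: "(\<tau> ^^ k') i = i" using inj_onD[OF af(3)] k(2) i unfolding k' by simp
  show "k = 1"
  proof (rule ccontr)
    assume "k \<noteq> 1"
    then have "k' \<ge> 1" using k' by simp
    have "(tau_lin G1 \<tau> ^^ k') (eps i) = eps i"
      using tau_lin_pow_eps[OF af(5), of k' \<tau> i] returns k(2) k' by simp
    moreover have "\<forall>m<k'. supp_in ((tau_lin G1 \<tau> ^^ m) (eps i)) G1"
      using tau_defined_simple_root_iff[OF adm i, of k'] k(2) k'
      unfolding tau_defined_def simple_root_in_posroots_lattice(2)[OF adm i] by simp
    moreover have "supp_in (eps i) G1" using i by (simp add: supp_in_eps_iff)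
    moreover have "eps i i \<noteq> 0" by (simp add: eps_def)
    ultimately show False
      using tau_lin_pow_not_periodic[OF af(6,3), of "eps i" i k'] \<open>k' \<ge> 1\<close> by blast
  qed
qed (use tau_pow_simple_root[OF assms] in simp)

lemma tau_neq_self:
  assumes adm: "admissible n G1 G2 \<tau>" and i: "i \<in> G1"
  shows "\<tau> i \<noteq> i"
proof
  assume "\<tau> i = i"
  then have "(\<tau> ^^ k) i = i" for k by (induction k) auto
  then show False using admissibleD(6)[OF adm] i by auto
qed

lemma finite_posroots: "finite (posroots n)"
proof (rule finite_subset)
  show "posroots n \<subseteq> (\<lambda>(a,b). \<lambda>m. eps a m - eps b m) ` ({1..n} \<times> {1..n})"
    unfolding posroots_def by (auto simp: image_iff)
qed auto

lemma finite_tau_defined_simple_root: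
  assumes adm: "admissible n G1 G2 \<tau>" and i: "i \<in> G1"
  shows "finite {k. 1 \<le> k \<and> tau_defined n G1 \<tau> (alpha i) k}"
proof -
  obtain j0 where j0: "(\<tau> ^^ j0) i \<notin> G1" using admissibleD(6)[OF adm] i by blast
  have "{k. 1 \<le> k \<and> tau_defined n G1 \<tau> (alpha i) k} \<subseteq> {..j0}"
  proof
    fix k assume "k \<in> {k. 1 \<le> k \<and> tau_defined n G1 \<tau> (alpha i) k}"
    then have "\<forall>m<k. (\<tau> ^^ m) i \<in> G1" by (simp add: tau_defined_simple_root_iff[OF adm i])
    then show "k \<in> {..j0}" using j0 by (meson atMost_iff not_le)
  qed
  then show ?thesis using finite_subset by blast
qed

text \<open>The coefficient of \<open>e\<^bsub>\<alpha>\<^sub>i\<^esub> \<otimes> e\<^bsub>-\<alpha>\<^bsub>\<tau>(i)\<^esub>\<^esub>\<close> in \<open>r\<^sub>B\<^sub>D\<close> comes only from the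
  term \<open>\<beta> = \<alpha>\<^sub>i\<close>, \<open>k = 1\<close> of the \<open>\<tau>\<close>-part.\<close>
lemma r_tau_simple_root_entry:
  assumes adm: "admissible n G1 G2 \<tau>" and i: "i \<in> G1"
  shows "r_tau n G1 \<tau> i (Suc i) (Suc (\<tau> i)) (\<tau> i) = (1::'a::comm_ring_1)"
proof -
  note af = admissibleD[OF adm]
  define j where "j = \<tau> i"
  define S where "S = posroots n \<inter> lattice n G1"
  define K where "K = (\<lambda>\<beta>. {k. 1 \<le> k \<and> tau_defined n G1 \<tau> \<beta> k})"
  have i1: "i \<in> {1..<n}" and j1: "j \<in> {1..<n}" using af(1,2,4) i unfolding j_def by auto
  have entry: "root_vec n \<beta> i (Suc i) * root_vec n (\<lambda>m. - tau_pow n G1 \<tau> \<beta> k m) (Suc j) j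
        - root_vec n (\<lambda>m. - tau_pow n G1 \<tau> \<beta> k m) i (Suc i) * root_vec n \<beta> (Suc j) j
      = (if \<beta> = alpha i then if tau_pow n G1 \<tau> \<beta> k = alpha j then 1 else 0 else (0::'a))"
    if "\<beta> \<in> S" for \<beta> k
  proof -
    have "\<beta> \<in> posroots n" using that unfolding S_def by simp
    then obtain a b where "1 \<le> a" "a < b" "b \<le> n" "\<beta> = (\<lambda>m. eps a m - eps b m)"
      unfolding posroots_def by blast
    then have "root_vec n \<beta> (Suc j) j = (0::'a)"
      using eps_diff_inj[of a b "Suc j" j] by (auto simp: root_vec_apply)
    then show ?thesis using i1 j1 by (auto simp: root_vec_apply neg_eq_eps_diff_iff alpha_def)
  qed
  have "r_tau n G1 \<tau> i (Suc i) (Suc j) j =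
      (\<Sum>\<beta>\<in>S. if \<beta> = alpha i then (\<Sum>k\<in>K \<beta>. if tau_pow n G1 \<tau> \<beta> k = alpha j then 1 else 0) else (0::'a))"
    unfolding r_tau_def wedge_def tensor_def S_def[symmetric] K_def
    by (intro sum.cong refl) (simp add: entry)
  also have "\<dots> = (\<Sum>k\<in>K (alpha i). if tau_pow n G1 \<tau> (alpha i) k = alpha j then 1 else (0::'a))"
    using finite_posroots simple_root_in_posroots_lattice(1)[OF adm i] unfolding S_def
    by (simp add: sum.delta)
  also have "\<dots> = (\<Sum>k\<in>K (alpha i). if k = 1 then 1 else (0::'a))"
    unfolding K_def j_def
    by (intro sum.cong refl) (simp add: tau_defined_simple_root_iff[OF adm i] tau_pow_simple_root_eq_iff[OF adm i])
  also have "\<dots> = 1"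
    using finite_tau_defined_simple_root[OF adm i] i
    unfolding K_def by (simp add: tau_defined_simple_root_iff[OF adm i])
  finally show ?thesis unfolding j_def .
qed

lemma r_BD_simple_root_entry:
  assumes adm: "admissible n G1 G2 \<tau>" and hh: "in_hh n r0" and i: "i \<in> G1"
  shows "r_BD n G1 \<tau> r0 i (Suc i) (Suc (\<tau> i)) (\<tau> i) = (1::'a::comm_ring_1)"
  using r_tau_simple_root_entry[OF adm i] tau_neq_self[OF adm i] in_hh_offdiag[OF hh]
  by (simp add: r_BD_apply r_std_apply)

lemma Ad2_diag_mat_fixed_ratio:
  fixes t :: "nat \<Rightarrow> 'a::field"
  assumes adm: "admissible n G1 G2 \<tau>" and hh: "in_hh n r0" and tnz: "\<forall>i\<in>{1..n}. t i \<noteq> 0"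
    and fixed: "Ad2 n (diag_mat n t) (r_BD n G1 \<tau> r0) = r_BD n G1 \<tau> r0" and i: "i \<in> G1"
  shows "t i * inverse (t (Suc i)) = t (\<tau> i) * inverse (t (Suc (\<tau> i)))"
proof -
  have "i \<in> {1..<n}" "\<tau> i \<in> {1..<n}" using admissibleD(1,2,4)[OF adm] i by auto
  moreover have "Ad2 n (diag_mat n t) (r_BD n G1 \<tau> r0) i (Suc i) (Suc (\<tau> i)) (\<tau> i) = 1"
    using fixed r_BD_simple_root_entry[OF adm hh i] by simp
  ultimately have "t i * inverse (t (Suc i)) * (t (Suc (\<tau> i)) * inverse (t (\<tau> i))) = 1"
    by (simp add: Ad2_diag_mat[OF tnz] r_BD_simple_root_entry[OF adm hh i])
  moreover have "t (\<tau> i) \<noteq> 0" "t (Suc (\<tau> i)) \<noteq> 0" using tnz \<open>\<tau> i \<in> {1..<n}\<close> by auto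
  ultimately show ?thesis by (simp add: field_simps)
qed

lemma prod_ratios_telescope:
  fixes t :: "nat \<Rightarrow> 'a::field"
  assumes tnz: "\<forall>p\<in>{1..n}. t p \<noteq> 0" and i: "i \<in> {1..n}"
  shows "t i = (\<Prod>m\<in>{i..n}. if m < n then t m * inverse (t (Suc m)) else t n)"
  using i
proof (induction "n - i" arbitrary: i)
  case (Suc q)
  then have "i < n" by auto
  then have "(\<Prod>m\<in>{i..n}. if m < n then t m * inverse (t (Suc m)) else t n)
      = t i * inverse (t (Suc i)) * (\<Prod>m\<in>{Suc i..n}. if m < n then t m * inverse (t (Suc m)) else t n)"
    by (simp add: prod.atLeast_Suc_atMost)
  also have "\<dots> = t i * inverse (t (Suc i)) * t (Suc i)" using Suc \<open>i < n\<close> by auto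
  finally show ?case using tnz \<open>i < n\<close> by simp
qed simp

section \<open>Diagonal matrices satisfying the condition lie in \<open>C(r\<^sub>B\<^sub>D)\<close>\<close>

text \<open>The character of the diagonal torus: \<open>diag(t)\<close> acts on \<open>e\<^sub>\<gamma>\<close> by \<open>t\<^sup>\<gamma>\<close>.\<close>
definition root_char :: "nat \<Rightarrow> (nat \<Rightarrow> 'a::field) \<Rightarrow> (nat \<Rightarrow> int) \<Rightarrow> 'a" where
  "root_char n t \<gamma> = (\<Prod>p\<in>{1..n}. t p powi \<gamma> p)"

lemma root_char_nonzero: "\<forall>p\<in>{1..n}. t p \<noteq> 0 \<Longrightarrow> root_char n t \<gamma> \<noteq> 0"
  unfolding root_char_def by (simp add: prod_zero_iff)

lemma root_char_uminus: "root_char n t (\<lambda>m. - \<gamma> m) = inverse (root_char n t \<gamma>)"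
  unfolding root_char_def using prod_inversef[of "\<lambda>p. t p powi \<gamma> p" "{1..n}"]
  by (simp add: power_int_minus comp_def)

lemma root_char_eps_diff:
  assumes "x \<in> {1..n}" "y \<in> {1..n}" "x \<noteq> y"
  shows "root_char n t (\<lambda>m. eps x m - eps y m) = t x * inverse (t y)"
proof -
  have "root_char n t (\<lambda>m. eps x m - eps y m) =
        (\<Prod>p\<in>{1..n}. (if p = x then t x else 1) * (if p = y then inverse (t y) else 1))"
    unfolding root_char_def using assms(3) by (intro prod.cong) (auto simp: eps_def power_int_minus)
  also have "\<dots> = t x * inverse (t y)" using assms by (simp add: prod.distrib prod.delta)
  finally show ?thesis .
qed

lemma root_vec_mult_ratio:
  fixes t :: "nat \<Rightarrow> 'a::field"
  shows "root_vec n \<gamma> a b * (t a * inverse (t b)) = root_vec n \<gamma> a b * root_char n t \<gamma>"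
  by (auto simp: root_vec_apply root_char_eps_diff)

text \<open>Writing \<open>t\<^sub>p = s\<^sub>p t\<^bsub>p+1\<^esub>\<close>, the character of \<open>\<Sum> c\<^sub>i \<alpha>\<^sub>i\<close> telescopes to \<open>\<Prod> s\<^sub>i\<^bsup>c\<^sub>i\<^esup>\<close>.\<close>
lemma root_char_root_of_upto:
  fixes t s :: "nat \<Rightarrow> 'a::field"
  assumes tnz: "\<forall>p\<in>{1..n}. t p \<noteq> 0" and ts: "\<forall>p\<in>{1..<n}. t p = s p * t (Suc p)"
    and c: "supp_in c {1..<n}" and N: "1 \<le> N" "N \<le> n"
  shows "(\<Prod>p\<in>{1..N}. t p powi root_of n c p) = (\<Prod>m\<in>{1..<N}. s m powi c m) * t N powi c N"
  using N
proof (induction N)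
  case (Suc N)
  show ?case
  proof (cases "N = 0")
    case True
    then show ?thesis using root_of_Suc[OF c, of 0] c unfolding supp_in_def by force
  next
    case False
    then have IH: "(\<Prod>p\<in>{1..N}. t p powi root_of n c p) = (\<Prod>m\<in>{1..<N}. s m powi c m) * t N powi c N"
      using Suc by auto
    have tN: "t N = s N * t (Suc N)" and nz: "t (Suc N) \<noteq> 0" using ts tnz Suc.prems False by auto
    have "(\<Prod>p\<in>{1..Suc N}. t p powi root_of n c p)
        = (\<Prod>p\<in>{1..N}. t p powi root_of n c p) * t (Suc N) powi root_of n c (Suc N)"
      by simp
    also have "\<dots> = (\<Prod>m\<in>{1..<N}. s m powi c m) * (s N powi c N * t (Suc N) powi c N)
            * (t (Suc N) powi c (Suc N) / t (Suc N) powi c N)"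
      unfolding IH root_of_Suc[OF c] tN power_int_mult_distrib
      using power_int_diff[of "t (Suc N)" "c (Suc N)" "c N"] nz by simp
    also have "\<dots> = ((\<Prod>m\<in>{1..<N}. s m powi c m) * s N powi c N) * t (Suc N) powi c (Suc N)"
      using nz by (simp add: field_simps)
    also have "(\<Prod>m\<in>{1..<N}. s m powi c m) * s N powi c N = (\<Prod>m\<in>{1..<Suc N}. s m powi c m)"
      using False by (simp add: prod.atLeastLessThan_Suc)
    finally show ?thesis .
  qed
qed simp

lemma root_char_root_of:
  fixes t s :: "nat \<Rightarrow> 'a::field"
  assumes "\<forall>p\<in>{1..n}. t p \<noteq> 0" "\<forall>p\<in>{1..<n}. t p = s p * t (Suc p)"
    and c: "supp_in c {1..<n}" and "n \<ge> 1"
  shows "root_char n t (root_of n c) = (\<Prod>m\<in>{1..<n}. s m powi c m)"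
proof -
  have "c n = 0" using c unfolding supp_in_def by force
  then show ?thesis
    unfolding root_char_def using root_char_root_of_upto[OF assms(1-3) \<open>n \<ge> 1\<close> order.refl] by simp
qed

lemma prod_powi_tau_lin:
  fixes s :: "nat \<Rightarrow> 'a::field"
  assumes adm: "admissible n G1 G2 \<tau>" and sc: "\<forall>i\<in>G1. s i = s (\<tau> i)" and c: "supp_in c G1"
  shows "(\<Prod>m\<in>{1..<n}. s m powi tau_lin G1 \<tau> c m) = (\<Prod>m\<in>{1..<n}. s m powi c m)"
proof -
  note af = admissibleD[OF adm]
  have "(\<Prod>m\<in>{1..<n}. s m powi tau_lin G1 \<tau> c m) = (\<Prod>m\<in>\<tau> ` G1. s m powi tau_lin G1 \<tau> c m)"
    using af(2,4) supp_in_tau_lin[of G1 \<tau> c] unfolding supp_in_def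
    by (intro prod.mono_neutral_right) (auto, metis power_int_0_right)
  also have "\<dots> = (\<Prod>i\<in>G1. s i powi c i)"
    using af(3) sc by (simp add: prod.reindex tau_lin_apply_image)
  also have "\<dots> = (\<Prod>m\<in>{1..<n}. s m powi c m)"
    using af(1) c unfolding supp_in_def by (intro prod.mono_neutral_left) (auto, metis power_int_0_right)
  finally show ?thesis .
qed

lemma root_char_tau_pow:
  fixes t s :: "nat \<Rightarrow> 'a::field"
  assumes adm: "admissible n G1 G2 \<tau>" and n: "n \<ge> 1"
    and tnz: "\<forall>p\<in>{1..n}. t p \<noteq> 0" and ts: "\<forall>p\<in>{1..<n}. t p = s p * t (Suc p)"
    and sc: "\<forall>i\<in>G1. s i = s (\<tau> i)"
    and \<beta>: "\<beta> \<in> posroots n \<inter> lattice n G1" and k: "tau_defined n G1 \<tau> \<beta> k" "1 \<le> k"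
  shows "root_char n t (tau_pow n G1 \<tau> \<beta> k) = root_char n t \<beta>"
proof -
  note af = admissibleD[OF adm]
  define c where "c = coeffs n G1 \<beta>"
  have c: "supp_in c G1" "\<beta> = root_of n c"
    using coeffs_lattice[of \<beta> n G1] \<beta> af(1) unfolding c_def by auto
  have defined: "\<forall>m<k. supp_in ((tau_lin G1 \<tau> ^^ m) c) G1"
    using k(1) unfolding tau_defined_def c_def by simp
  have "(\<Prod>m\<in>{1..<n}. s m powi (tau_lin G1 \<tau> ^^ k) c m) = (\<Prod>m\<in>{1..<n}. s m powi c m)"
    using defined
  proof (induction k)
    case (Suc k)
    then show ?case using prod_powi_tau_lin[OF adm sc, of "(tau_lin G1 \<tau> ^^ k) c"] by simp
  qed simp
  moreover have "root_char n t (tau_pow n G1 \<tau> \<beta> k) = (\<Prod>m\<in>{1..<n}. s m powi (tau_lin G1 \<tau> ^^ k) c m)"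
    unfolding tau_pow_def c_def[symmetric]
    by (rule root_char_root_of[OF tnz ts supp_in_tau_lin_pow[OF adm k(2)] n])
  moreover have "root_char n t \<beta> = (\<Prod>m\<in>{1..<n}. s m powi c m)"
    using root_char_root_of[OF tnz ts supp_in_mono[OF c(1) af(1)] n] c(2) by simp
  ultimately show ?thesis by simp
qed

lemma wedge_root_vec_mult_ratio:
  fixes t :: "nat \<Rightarrow> 'a::field"
  assumes "root_char n t \<gamma> * root_char n t \<delta> = 1"
  shows "wedge (root_vec n \<gamma>) (root_vec n \<delta>) a b c d * (t a * inverse (t b) * (t c * inverse (t d)))
       = wedge (root_vec n \<gamma>) (root_vec n \<delta>) a b c d"
proof -
  have weight: "root_vec n \<gamma>' x y * root_vec n \<delta>' z w * (t x * inverse (t y) * (t z * inverse (t w)))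
      = root_vec n \<gamma>' x y * root_vec n \<delta>' z w * (root_char n t \<gamma>' * root_char n t \<delta>')"
    for \<gamma>' \<delta>' x y z w
  proof -
    have "root_vec n \<gamma>' x y * root_vec n \<delta>' z w * (t x * inverse (t y) * (t z * inverse (t w)))
        = (root_vec n \<gamma>' x y * (t x * inverse (t y))) * (root_vec n \<delta>' z w * (t z * inverse (t w)))"
      by (simp add: mult_ac)
    also have "\<dots> = (root_vec n \<gamma>' x y * root_char n t \<gamma>') * (root_vec n \<delta>' z w * root_char n t \<delta>')"
      by (simp only: root_vec_mult_ratio)
    finally show ?thesis by (simp add: mult_ac)
  qed
  have "root_vec n \<gamma> a b * root_vec n \<delta> c d * (t a * inverse (t b) * (t c * inverse (t d)))
      = root_vec n \<gamma> a b * root_vec n \<delta> c d"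
    using weight[of \<gamma> a b \<delta> c d] unfolding assms mult_1_right .
  moreover have "root_vec n \<delta> a b * root_vec n \<gamma> c d * (t a * inverse (t b) * (t c * inverse (t d)))
      = root_vec n \<delta> a b * root_vec n \<gamma> c d"
    using weight[of \<delta> a b \<gamma> c d] unfolding mult.commute[of "root_char n t \<delta>"] assms mult_1_right .
  ultimately show ?thesis unfolding wedge_def tensor_def left_diff_distrib by (simp only:)
qed

lemma Ad2_diag_mat_r_BD:
  fixes r0 :: "'a::field tens" and t s :: "nat \<Rightarrow> 'a"
  assumes adm: "admissible n G1 G2 \<tau>" and hh: "in_hh n r0" and n: "n \<ge> 1"
    and tnz: "\<forall>p\<in>{1..n}. t p \<noteq> 0" and ts: "\<forall>p\<in>{1..<n}. t p = s p * t (Suc p)"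
    and sc: "\<forall>i\<in>G1. s i = s (\<tau> i)"
  shows "Ad2 n (diag_mat n t) (r_BD n G1 \<tau> r0) = r_BD n G1 \<tau> r0"
proof (intro ext)
  fix a b c d
  let ?R = "t a * inverse (t b) * (t c * inverse (t d))"
  show "Ad2 n (diag_mat n t) (r_BD n G1 \<tau> r0) a b c d = r_BD n G1 \<tau> r0 a b c d"
  proof (cases "a \<in> {1..n} \<and> b \<in> {1..n} \<and> c \<in> {1..n} \<and> d \<in> {1..n}")
    case False
    then show ?thesis
      using in_hh_outside[OF hh False] r_tau_outside[OF False]
      by (auto simp: Ad2_diag_mat[OF tnz] r_BD_apply r_std_apply)
  next
    case inside: True
    have "r0 a b c d * ?R = r0 a b c d"
      using tnz inside in_hh_offdiag[OF hh, of a b c d] by (cases "a = b \<and> c = d") auto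
    moreover have "r_std n a b c d * ?R = r_std n a b c d"
    proof (cases "c = b \<and> d = a")
      case True
      then have "?R = 1" using tnz inside by (simp add: field_simps)
      then show ?thesis by simp
    qed (auto simp: r_std_apply)
    moreover have "r_tau n G1 \<tau> a b c d * ?R = r_tau n G1 \<tau> a b c d"
      unfolding r_tau_def sum_distrib_right
    proof (intro sum.cong refl wedge_root_vec_mult_ratio)
      fix \<beta> k assume "\<beta> \<in> posroots n \<inter> lattice n G1" "k \<in> {k. 1 \<le> k \<and> tau_defined n G1 \<tau> \<beta> k}"
      then have "root_char n t (tau_pow n G1 \<tau> \<beta> k) = root_char n t \<beta>"
        using root_char_tau_pow[OF adm n tnz ts sc] by blast
      then show "root_char n t \<beta> * root_char n t (\<lambda>m. - tau_pow n G1 \<tau> \<beta> k m) = 1"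
        using root_char_nonzero[OF tnz] by (simp add: root_char_uminus)
    qed
    moreover have "Ad2 n (diag_mat n t) (r_BD n G1 \<tau> r0) a b c d = r_BD n G1 \<tau> r0 a b c d * ?R"
      using inside by (simp add: Ad2_diag_mat[OF tnz] mult.assoc)
    ultimately show ?thesis by (simp only: r_BD_apply distrib_right)
  qed
qed

lemma Cent_r_BD_elem_prod_diag:
  fixes r0 :: "'a::field_char_0 tens"
  assumes adm: "admissible n G1 G2 \<tau>" and hh: "in_hh n r0"
    and om: "\<forall>a b c d. r0 a b c d + flip21 r0 a b c d = Omega0 n a b c d"
    and P: "P \<in> Cent n (r_BD n G1 \<tau> r0)"
  shows "\<exists>s. (\<forall>i\<in>{1..n}. s i \<noteq> 0) \<and> (\<forall>i\<in>G1. s i = s (\<tau> i)) \<and>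
           P = diag_mat n (\<lambda>i. \<Prod>m\<in>{i..n}. s m)"
proof -
  define t where "t = (\<lambda>i. P i i)"
  define s where "s = (\<lambda>m. if m < n then t m * inverse (t (Suc m)) else t n)"
  have GL: "P \<in> GL n" and fixed: "Ad2 n P (r_BD n G1 \<tau> r0) = r_BD n G1 \<tau> r0"
    using P unfolding Cent_def by auto
  note diag = GL_diag_mat_of_offdiag_eq_0[OF GL Cent_r_BD_offdiag_eq_0[OF adm hh om P]]
  have Pt: "P = diag_mat n t" unfolding t_def by (rule diag(1))
  have tnz: "\<forall>i\<in>{1..n}. t i \<noteq> 0" unfolding t_def by (rule diag(2))
  have "s i = s (\<tau> i)" if "i \<in> G1" for i
    using Ad2_diag_mat_fixed_ratio[OF adm hh tnz fixed[unfolded Pt] that]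
      admissibleD(1,2,4)[OF adm] that unfolding s_def by auto
  moreover have "\<forall>i\<in>{1..n}. s i \<noteq> 0" using tnz unfolding s_def by auto
  moreover have "P = diag_mat n (\<lambda>i. \<Prod>m\<in>{i..n}. s m)"
    unfolding Pt diag_mat_def s_def using prod_ratios_telescope[OF tnz] by (intro ext) simp
  ultimately show ?thesis by blast
qed

lemma prod_diag_mat_in_Cent_r_BD:
  fixes r0 :: "'a::field tens"
  assumes adm: "admissible n G1 G2 \<tau>" and hh: "in_hh n r0" and n: "n \<ge> 1"
    and snz: "\<forall>i\<in>{1..n}. s i \<noteq> 0" and sc: "\<forall>i\<in>G1. s i = s (\<tau> i)"
  shows "diag_mat n (\<lambda>i. \<Prod>m\<in>{i..n}. s m) \<in> Cent n (r_BD n G1 \<tau> r0)"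
proof -
  let ?t = "\<lambda>i. \<Prod>m\<in>{i..n}. s m"
  have tnz: "\<forall>p\<in>{1..n}. ?t p \<noteq> 0" using snz by (auto simp: prod_zero_iff)
  have ts: "\<forall>p\<in>{1..<n}. ?t p = s p * ?t (Suc p)" by (auto simp: prod.atLeast_Suc_atMost)
  show ?thesis
    unfolding Cent_def using diag_mat_in_GL[OF tnz] Ad2_diag_mat_r_BD[OF adm hh n tnz ts sc] by simp
qed

theorem mainTheorem8:
  fixes n :: nat and G1 G2 :: "nat set" and \<tau> :: "nat \<Rightarrow> nat" and r0 :: "Kbar tens"
  assumes "n \<ge> 2"
    and "admissible n G1 G2 \<tau>"
    and "in_hh n r0"
    and "\<forall>a b c d. r0 a b c d + flip21 r0 a b c d = Omega0 n a b c d"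
    and "\<forall>i\<in>G1. \<forall>a b. slot1 n (root_fun (\<tau> i)) r0 a b + slot2 n (root_fun i) r0 a b = 0"
  shows "Cent n (r_BD n G1 \<tau> r0) =
    {T. \<exists>s :: nat \<Rightarrow> Kbar. (\<forall>i\<in>{1..n}. s i \<noteq> 0) \<and> (\<forall>i\<in>G1. s i = s (\<tau> i)) \<and>
         T = diag_mat n (\<lambda>i. \<Prod>m\<in>{i..n}. s m)}"
proof (intro equalityI subsetI)
  fix P assume "P \<in> Cent n (r_BD n G1 \<tau> r0)"
  then show "P \<in> {T. \<exists>s. (\<forall>i\<in>{1..n}. s i \<noteq> 0) \<and> (\<forall>i\<in>G1. s i = s (\<tau> i)) \<and>
         T = diag_mat n (\<lambda>i. \<Prod>m\<in>{i..n}. s m)}"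
    using Cent_r_BD_elem_prod_diag[OF assms(2-4)] by blast
next
  fix T assume "T \<in> {T. \<exists>s :: nat \<Rightarrow> Kbar. (\<forall>i\<in>{1..n}. s i \<noteq> 0) \<and> (\<forall>i\<in>G1. s i = s (\<tau> i)) \<and>
         T = diag_mat n (\<lambda>i. \<Prod>m\<in>{i..n}. s m)}"
  then show "T \<in> Cent n (r_BD n G1 \<tau> r0)"
    using prod_diag_mat_in_Cent_r_BD[OF assms(2,3)] \<open>n \<ge> 2\<close> by auto
qed

end
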